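(* Let $\mathcal X\subseteq\mathbb{R}^d$ be compact, let $P$ be a probability measure supported on $\mathcal X$, let $r:\mathcal X\to\mathbb{R}$ be a measurable reward, and fix $\lambda\ge 0$. Let $T_\lambda:\mathbb{R}^d\to\mathcal X$ be a measurable map satisfying, for all $y$, $$T_\lambda(y)\in\operatorname*{argmax}_{x\in\mathcal X}\{r(x)-\lambda\|x-y\|^2\}.$$ Then the pushforward law $Q_\lambda=(T_\lambda)_\#P$ satisfies $$Q_\lambda\in\operatorname*{argmax}_{Q\in\Delta(\mathcal X)}\Big\{\mathbb E_Q[r]-\lambda\,\mathcal W_2^2(Q,P)\Big\}.$$
   Context: $\Delta(\mathcal X)$ is the set of probability measures on $\mathcal X$; $(T)_\#P$ is the law of $T(Y)$ for $Y\sim P$; $\mathcal W_2^2(Q,P)=\inf_{\gamma\in\Pi(Q,P)}\mathbb E_{(X,Y)\sim\gamma}\|X-Y\|_2^2$ with $\Pi(Q,P)$ the set of couplings; $\|\cdot\|$ is the Euclidean norm. *)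

theory Defs
  imports "HOL-Probability.Probability"
begin

text \<open>Delta(X): Borel probability measures on the ambient space giving full mass to X.\<close>
definition prob_on :: "'a::euclidean_space set \<Rightarrow> 'a measure \<Rightarrow> bool" where
  "prob_on X Q \<longleftrightarrow> prob_space Q \<and> sets Q = sets borel \<and> emeasure Q X = 1"

definition couplings :: "'a::euclidean_space measure \<Rightarrow> 'a measure \<Rightarrow> ('a \<times> 'a) measure set" where
  "couplings Q P = {\<gamma>. prob_space \<gamma> \<and> sets \<gamma> = sets (borel \<Otimes>\<^sub>M borel)
      \<and> distr \<gamma> borel fst = Q \<and> distr \<gamma> borel snd = P}"

definition W2sq :: "'a::euclidean_space measure \<Rightarrow> 'a measure \<Rightarrow> ennreal" where
  "W2sq Q P = (INF \<gamma>\<in>couplings Q P. \<integral>\<^sup>+ z. ennreal ((norm (fst z - snd z))\<^sup>2) \<partial>\<gamma>)"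

definition expect_ereal :: "'a measure \<Rightarrow> ('a \<Rightarrow> real) \<Rightarrow> ereal" where
  "expect_ereal Q r = enn2ereal (\<integral>\<^sup>+ x. ennreal (r x) \<partial>Q) - enn2ereal (\<integral>\<^sup>+ x. ennreal (- r x) \<partial>Q)"

definition objective :: "('a::euclidean_space \<Rightarrow> real) \<Rightarrow> real \<Rightarrow> 'a measure \<Rightarrow> 'a measure \<Rightarrow> ereal" where
  "objective r lam P Q = expect_ereal Q r - ereal lam * enn2ereal (W2sq Q P)"

end

theory Submission
  imports Defs
begin

text \<open>The pointwise optimality of \<open>T\<close> says that \<open>r x - \<lambda>\<parallel>x - y\<parallel>\<^sup>2 \<le> \<phi> y\<close> for all \<open>x \<in> X\<close>, where
  \<open>\<phi> y = r (T y) - \<lambda>\<parallel>T y - y\<parallel>\<^sup>2\<close> is the optimal value of the pointwise problem. Integrating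
  this against an arbitrary coupling of \<open>Q\<close> and \<open>P\<close> bounds the objective of every \<open>Q\<close> by
  \<open>\<integral>\<phi> dP\<close> (weak duality). The coupling of \<open>T\<^sub>#P\<close> and \<open>P\<close> induced by \<open>y \<mapsto> (T y, y)\<close> turns
  the inequality into an equality, so \<open>T\<^sub>#P\<close> attains the bound. Compactness of \<open>X\<close> keeps all
  integrals finite.\<close>

lemma expect_ereal_integrable:
  assumes "integrable M f"
  shows "expect_ereal M f = ereal (\<integral>x. f x \<partial>M)"
proof -
  obtain p where p: "(\<integral>\<^sup>+ x. ennreal (f x) \<partial>M) = ennreal p" "p \<ge> 0"
    using assms unfolding real_integrable_def by (cases "\<integral>\<^sup>+ x. ennreal (f x) \<partial>M") auto
  obtain n where n: "(\<integral>\<^sup>+ x. ennreal (- f x) \<partial>M) = ennreal n" "n \<ge> 0"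
    using assms unfolding real_integrable_def by (cases "\<integral>\<^sup>+ x. ennreal (- f x) \<partial>M") auto
  show ?thesis
    unfolding expect_ereal_def real_lebesgue_integral_def[OF assms] p n
    using p(2) n(2) by (simp del: ennreal_neg)
qed

lemma expect_ereal_bounded_above:
  assumes "prob_space M" "f \<in> borel_measurable M" "AE x in M. f x \<le> K"
  shows "expect_ereal M f = -\<infinity> \<or> integrable M f"
proof -
  interpret prob_space M by fact
  have "(\<integral>\<^sup>+ x. ennreal (f x) \<partial>M) \<le> (\<integral>\<^sup>+ x. ennreal (max K 0) \<partial>M)"
    using assms(3) by (intro nn_integral_mono_AE) (auto intro: ennreal_leI)
  also have "\<dots> < \<infinity>" by (simp add: emeasure_space_1)
  finally obtain p where p: "(\<integral>\<^sup>+ x. ennreal (f x) \<partial>M) = ennreal p" "p \<ge> 0"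
    by (cases "\<integral>\<^sup>+ x. ennreal (f x) \<partial>M") auto
  show ?thesis
  proof (cases "(\<integral>\<^sup>+ x. ennreal (- f x) \<partial>M) = \<infinity>")
    case True
    then show ?thesis unfolding expect_ereal_def p True using p(2) by simp
  next
    case False
    then show ?thesis using p assms(2) unfolding real_integrable_def by auto
  qed
qed

lemma prob_on_AE_mem:
  assumes "prob_on X Q" "X \<in> sets borel"
  shows "AE x in Q. x \<in> X"
proof -
  interpret prob_space Q using assms(1) unfolding prob_on_def by auto
  have "X \<in> sets Q" "measure Q X = 1"
    using assms unfolding prob_on_def measure_def by auto
  then show ?thesis by (simp add: AE_prob_1)
qed

lemma prob_on_integrable_bounded:
  assumes "prob_on X Q" "X \<in> sets borel" "f \<in> borel_measurable borel"
    and "\<And>x. x \<in> X \<Longrightarrow> \<bar>f x\<bar> \<le> (B :: real)"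
  shows "integrable Q f"
proof -
  interpret prob_space Q using assms(1) unfolding prob_on_def by auto
  have "sets Q = sets borel" using assms(1) unfolding prob_on_def by auto
  then have "f \<in> borel_measurable Q" using assms(3) measurable_cong_sets by blast
  moreover have "AE x in Q. norm (f x) \<le> B"
    using prob_on_AE_mem[OF assms(1,2)] by eventually_elim (use assms(4) in auto)
  ultimately show ?thesis by (intro integrable_const_bound[where B=B])
qed

lemma prob_on_distr:
  assumes "prob_on X P" "T \<in> borel_measurable borel" "\<And>y. T y \<in> Y" "Y \<in> sets borel"
  shows "prob_on Y (distr P borel T)"
proof -
  interpret prob_space P using assms(1) unfolding prob_on_def by auto
  have "sets P = sets borel" using assms(1) unfolding prob_on_def by auto
  then have T: "T \<in> measurable P borel" using assms(2) measurable_cong_sets by blast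
  have "emeasure (distr P borel T) Y = emeasure P (T -` Y \<inter> space P)"
    using T assms(4) by (rule emeasure_distr)
  also have "T -` Y \<inter> space P = space P" using assms(3) by auto
  finally show ?thesis
    unfolding prob_on_def using prob_space_distr[OF T] by (simp add: emeasure_space_1)
qed

lemma integral_distr_integrable:
  fixes f :: "'b \<Rightarrow> real"
  assumes "T \<in> measurable M N" "integrable (distr M N T) f"
  shows "(\<integral>y. f y \<partial>distr M N T) = (\<integral>x. f (T x) \<partial>M)"
  using assms by (intro integral_distr) (auto dest: borel_measurable_integrable)

lemma couplingsD:
  assumes "\<gamma> \<in> couplings Q P"
  shows "prob_space \<gamma>" "fst \<in> measurable \<gamma> borel" "snd \<in> measurable \<gamma> borel"
    and "distr \<gamma> borel fst = Q" "distr \<gamma> borel snd = P"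
proof -
  have "sets \<gamma> = sets (borel \<Otimes>\<^sub>M borel)" using assms unfolding couplings_def by auto
  then have "measurable \<gamma> borel = measurable (borel \<Otimes>\<^sub>M borel) (borel :: 'a measure)"
    by (intro measurable_cong_sets) auto
  then show "fst \<in> measurable \<gamma> borel" "snd \<in> measurable \<gamma> borel" by simp_all
  show "prob_space \<gamma>" "distr \<gamma> borel fst = Q" "distr \<gamma> borel snd = P"
    using assms unfolding couplings_def by auto
qed

lemma couplings_AE:
  assumes "\<gamma> \<in> couplings Q P" "X \<in> sets borel" "Y \<in> sets borel"
    and "AE x in Q. x \<in> X" "AE y in P. y \<in> Y"
  shows "AE z in \<gamma>. fst z \<in> X \<and> snd z \<in> Y"
proof -
  note \<gamma> = couplingsD[OF assms(1)]
  have "AE z in \<gamma>. fst z \<in> X"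
    using assms(4) unfolding \<gamma>(4)[symmetric] by (subst (asm) AE_distr_iff[OF \<gamma>(2)]) (auto simp: assms(2))
  moreover have "AE z in \<gamma>. snd z \<in> Y"
    using assms(5) unfolding \<gamma>(5)[symmetric] by (subst (asm) AE_distr_iff[OF \<gamma>(3)]) (auto simp: assms(3))
  ultimately show ?thesis by eventually_elim simp
qed

lemma couplings_weak_duality:
  fixes f g :: "'a::euclidean_space \<Rightarrow> real"
  assumes "\<gamma> \<in> couplings Q P" "integrable Q f" "integrable P g" "integrable \<gamma> c"
    and "AE z in \<gamma>. f (fst z) - c z \<le> g (snd z)"
  shows "(\<integral>x. f x \<partial>Q) - (\<integral>z. c z \<partial>\<gamma>) \<le> (\<integral>y. g y \<partial>P)"
proof -
  note \<gamma> = couplingsD[OF assms(1)]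
  have f: "integrable \<gamma> (\<lambda>z. f (fst z))" "(\<integral>x. f x \<partial>Q) = (\<integral>z. f (fst z) \<partial>\<gamma>)"
    using assms(2) integrable_distr[OF \<gamma>(2)] integral_distr_integrable[OF \<gamma>(2)]
    unfolding \<gamma>(4) by auto
  have g: "integrable \<gamma> (\<lambda>z. g (snd z))" "(\<integral>y. g y \<partial>P) = (\<integral>z. g (snd z) \<partial>\<gamma>)"
    using assms(3) integrable_distr[OF \<gamma>(3)] integral_distr_integrable[OF \<gamma>(3)]
    unfolding \<gamma>(5) by auto
  have "(\<integral>z. f (fst z) - c z \<partial>\<gamma>) \<le> (\<integral>z. g (snd z) \<partial>\<gamma>)"
    using f(1) g(1) assms(4,5) by (intro integral_mono_AE) auto
  then show ?thesis using f g assms(4) by simp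
qed

lemma graph_in_couplings:
  assumes "prob_space P" "sets P = sets borel" "T \<in> borel_measurable borel"
  shows "distr P (borel \<Otimes>\<^sub>M borel) (\<lambda>y. (T y, y)) \<in> couplings (distr P borel T) P"
proof -
  have measurable_P: "measurable P N = measurable borel N" for N :: "'b measure"
    using assms(2) by (intro measurable_cong_sets) auto
  have graph: "(\<lambda>y. (T y, y)) \<in> measurable P (borel \<Otimes>\<^sub>M borel)"
    using assms(3) by (simp add: measurable_P)
  have "distr P borel (\<lambda>y. y) = P" using assms(2) by (intro distr_id2) auto
  then show ?thesis
    unfolding couplings_def
    using prob_space.prob_space_distr[OF assms(1) graph]
    by (simp add: distr_distr[OF measurable_fst graph] distr_distr[OF measurable_snd graph] o_def)
qed

lemma pair_measure_in_couplings:
  assumes "prob_space Q" "prob_space P" "sets Q = sets borel" "sets P = sets borel"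
  shows "Q \<Otimes>\<^sub>M P \<in> couplings Q P"
proof -
  interpret Q: prob_space Q by fact
  interpret P: prob_space P by fact
  interpret QP: pair_prob_space Q P ..
  have "distr (Q \<Otimes>\<^sub>M P) borel fst = distr (Q \<Otimes>\<^sub>M P) Q fst"
    using assms(3) by (intro distr_cong) auto
  also have "\<dots> = Q" by (rule P.distr_pair_fst)
  finally have fst: "distr (Q \<Otimes>\<^sub>M P) borel fst = Q" .
  have "distr (Q \<Otimes>\<^sub>M P) borel snd = P"
  proof (rule measure_eqI)
    fix A assume "A \<in> sets (distr (Q \<Otimes>\<^sub>M P) borel snd)"
    then have A: "A \<in> sets P" using assms(4) by simp
    have "emeasure (distr (Q \<Otimes>\<^sub>M P) borel snd) A = emeasure (Q \<Otimes>\<^sub>M P) (space Q \<times> A)"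
      using A assms(4) sets.sets_into_space[OF A]
      by (subst emeasure_distr) (auto simp: space_pair_measure intro!: arg_cong[where f="emeasure _"])
    also have "\<dots> = emeasure P A"
      using P.emeasure_pair_measure_Times[OF sets.top[of Q] A] by (simp add: Q.emeasure_space_1)
    finally show "emeasure (distr (Q \<Otimes>\<^sub>M P) borel snd) A = emeasure P A" .
  qed (simp add: assms(4))
  then show ?thesis
    unfolding couplings_def using fst QP.prob_space_axioms assms(3,4) by auto
qed

lemma sq_dist_le_diameter:
  fixes x y :: "'a::real_normed_vector"
  assumes "bounded S" "x \<in> S" "y \<in> S"
  shows "(norm (x - y))\<^sup>2 \<le> (diameter S)\<^sup>2"
  using diameter_bounded_bound[OF assms] by (simp add: dist_norm power_mono)

lemma couplings_cost_integrable:
  assumes "\<gamma> \<in> couplings Q P" "bounded X" "X \<in> sets borel"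
    and "AE x in Q. x \<in> X" "AE y in P. y \<in> X"
  shows "integrable \<gamma> (\<lambda>z. (norm (fst z - snd z))\<^sup>2)"
proof -
  interpret prob_space \<gamma> using couplingsD(1)[OF assms(1)] .
  have "AE z in \<gamma>. norm ((norm (fst z - snd z))\<^sup>2) \<le> (diameter X)\<^sup>2"
    using couplings_AE[OF assms(1,3,3,4,5)]
    by eventually_elim (simp add: sq_dist_le_diameter[OF assms(2)])
  moreover have "(\<lambda>z. (norm (fst z - snd z))\<^sup>2) \<in> borel_measurable \<gamma>"
    using couplingsD(2,3)[OF assms(1)] by measurable
  ultimately show ?thesis by (intro integrable_const_bound[where B="(diameter X)\<^sup>2"])
qed

lemma W2sq_distr_le:
  assumes "prob_space P" "sets P = sets borel" "T \<in> borel_measurable borel"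
  shows "W2sq (distr P borel T) P \<le> (\<integral>\<^sup>+ y. ennreal ((norm (T y - y))\<^sup>2) \<partial>P)"
proof -
  have graph: "(\<lambda>y. (T y, y)) \<in> measurable P (borel \<Otimes>\<^sub>M borel)"
    using assms(2,3) measurable_cong_sets[OF assms(2) refl] by simp
  have "W2sq (distr P borel T) P
      \<le> (\<integral>\<^sup>+ z. ennreal ((norm (fst z - snd z))\<^sup>2) \<partial>distr P (borel \<Otimes>\<^sub>M borel) (\<lambda>y. (T y, y)))"
    unfolding W2sq_def by (rule INF_lower[OF graph_in_couplings[OF assms]])
  also have "\<dots> = (\<integral>\<^sup>+ y. ennreal ((norm (T y - y))\<^sup>2) \<partial>P)"
    by (simp add: nn_integral_distr[OF graph])
  finally show ?thesis .
qed

lemma W2sq_ge: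
  assumes "\<And>\<gamma>. \<gamma> \<in> couplings Q P \<Longrightarrow> integrable \<gamma> (\<lambda>z. (norm (fst z - snd z))\<^sup>2)"
    and "\<And>\<gamma>. \<gamma> \<in> couplings Q P \<Longrightarrow> w \<le> (\<integral>z. (norm (fst z - snd z))\<^sup>2 \<partial>\<gamma>)"
  shows "ennreal w \<le> W2sq Q P"
  unfolding W2sq_def
proof (rule INF_greatest)
  fix \<gamma> assume "\<gamma> \<in> couplings Q P"
  then show "ennreal w \<le> (\<integral>\<^sup>+ z. ennreal ((norm (fst z - snd z))\<^sup>2) \<partial>\<gamma>)"
    using assms by (simp add: nn_integral_eq_integral ennreal_leI)
qed

lemma objective_ge:
  assumes "expect_ereal Q r = ereal a" "W2sq Q P \<le> ennreal w" "0 \<le> lam" "0 \<le> w"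
  shows "ereal (a - lam * w) \<le> objective r lam P Q"
proof -
  have "enn2ereal (W2sq Q P) \<le> ereal w"
    using assms(2,4) by (metis enn2ereal_ennreal less_eq_ennreal.rep_eq)
  then have "ereal lam * enn2ereal (W2sq Q P) \<le> ereal (lam * w)"
    using assms(3) by (metis ereal_mult_left_mono times_ereal.simps(1) ereal_less_eq(5))
  then show ?thesis
    unfolding objective_def assms(1) by (metis ereal_minus(1) ereal_minus_mono order_refl)
qed

lemma objective_le:
  assumes "expect_ereal Q r = ereal a" "ennreal w \<le> W2sq Q P" "0 \<le> lam" "0 \<le> w"
  shows "objective r lam P Q \<le> ereal (a - lam * w)"
proof -
  have "ereal w \<le> enn2ereal (W2sq Q P)"
    using assms(2,4) by (metis enn2ereal_ennreal less_eq_ennreal.rep_eq)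
  then have "ereal (lam * w) \<le> ereal lam * enn2ereal (W2sq Q P)"
    using assms(3) by (metis ereal_mult_left_mono times_ereal.simps(1) ereal_less_eq(5))
  then show ?thesis
    unfolding objective_def assms(1) by (metis ereal_minus(1) ereal_minus_mono order_refl)
qed

locale pointwise_maximizer =
  fixes X :: "'a::euclidean_space set" and P :: "'a measure"
    and r :: "'a \<Rightarrow> real" and lam :: real and T :: "'a \<Rightarrow> 'a"
  assumes compact: "compact X"
    and P_on: "prob_on X P"
    and r_measurable[measurable]: "r \<in> borel_measurable borel"
    and lam_nonneg: "lam \<ge> 0"
    and T_measurable[measurable]: "T \<in> borel_measurable borel"
    and T_in: "\<And>y. T y \<in> X"
    and T_maximizer: "\<And>y x. x \<in> X \<Longrightarrow> r x - lam * (norm (x - y))\<^sup>2 \<le> r (T y) - lam * (norm (T y - y))\<^sup>2"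
begin

definition envelope :: "'a \<Rightarrow> real" where
  "envelope y = r (T y) - lam * (norm (T y - y))\<^sup>2"

lemma envelope_ge: "x \<in> X \<Longrightarrow> r x - lam * (norm (x - y))\<^sup>2 \<le> envelope y"
  unfolding envelope_def by (rule T_maximizer)

lemma envelope_le: "envelope y \<le> r (T y)"
  unfolding envelope_def using lam_nonneg by simp

lemma X_borel[measurable]: "X \<in> sets borel"
  using compact by (simp add: compact_imp_closed)

lemma X_bounded: "bounded X"
  using compact by (rule compact_imp_bounded)

lemma lam_sq_dist_le: "x \<in> X \<Longrightarrow> y \<in> X \<Longrightarrow> lam * (norm (x - y))\<^sup>2 \<le> lam * (diameter X)\<^sup>2"
  using sq_dist_le_diameter[OF X_bounded] lam_nonneg by (rule mult_left_mono)

lemma r_bounded_above: "x \<in> X \<Longrightarrow> r x \<le> r (T (T 0)) + lam * (diameter X)\<^sup>2"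
  using envelope_ge[of x "T 0"] envelope_le[of "T 0"] lam_sq_dist_le[of x "T 0"] T_in by fastforce

lemma envelope_bounded_below: "y \<in> X \<Longrightarrow> r (T 0) - lam * (diameter X)\<^sup>2 \<le> envelope y"
  using envelope_ge[of "T 0" y] lam_sq_dist_le[of "T 0" y] T_in by fastforce

lemma integrable_reward_T: "integrable P (\<lambda>y. r (T y))"
proof (rule prob_on_integrable_bounded[OF P_on X_borel])
  fix y assume "y \<in> X"
  then have "r (T 0) - lam * (diameter X)\<^sup>2 \<le> r (T y)" "r (T y) \<le> r (T (T 0)) + lam * (diameter X)\<^sup>2"
    using envelope_bounded_below envelope_le r_bounded_above T_in by (fastforce intro: order_trans)+
  then show "\<bar>r (T y)\<bar> \<le> \<bar>r (T 0) - lam * (diameter X)\<^sup>2\<bar> + \<bar>r (T (T 0)) + lam * (diameter X)\<^sup>2\<bar>"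
    by linarith
qed measurable

lemma integrable_transport_cost: "integrable P (\<lambda>y. (norm (T y - y))\<^sup>2)"
  using sq_dist_le_diameter[OF X_bounded] T_in
  by (intro prob_on_integrable_bounded[OF P_on X_borel, where B="(diameter X)\<^sup>2"]) auto

lemma integrable_envelope: "integrable P envelope"
  unfolding envelope_def using integrable_reward_T integrable_transport_cost by simp

lemma objective_distr_ge: "ereal (\<integral>y. envelope y \<partial>P) \<le> objective r lam P (distr P borel T)"
proof -
  have P: "prob_space P" "sets P = sets borel" using P_on unfolding prob_on_def by auto
  then have T: "T \<in> measurable P borel" using measurable_cong_sets[OF P(2) refl] by simp
  have "integrable (distr P borel T) r"
    using integrable_reward_T by (simp add: integrable_distr_eq[OF T])
  then have "expect_ereal (distr P borel T) r = ereal (\<integral>y. r (T y) \<partial>P)"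
    by (simp add: expect_ereal_integrable integral_distr[OF T])
  moreover have "W2sq (distr P borel T) P \<le> ennreal (\<integral>y. (norm (T y - y))\<^sup>2 \<partial>P)"
    using W2sq_distr_le[OF P T_measurable] integrable_transport_cost by (simp add: nn_integral_eq_integral)
  ultimately show ?thesis
    using objective_ge lam_nonneg integrable_reward_T integrable_transport_cost
    by (fastforce simp: envelope_def)
qed

lemma P_AE_mem: "AE y in P. y \<in> X"
  using P_on X_borel by (rule prob_on_AE_mem)

lemma coupling_bound:
  assumes "\<gamma> \<in> couplings Q P" "integrable Q r" "AE x in Q. x \<in> X"
  shows "(\<integral>x. r x \<partial>Q) - lam * (\<integral>z. (norm (fst z - snd z))\<^sup>2 \<partial>\<gamma>) \<le> (\<integral>y. envelope y \<partial>P)"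
proof -
  have cost: "integrable \<gamma> (\<lambda>z. (norm (fst z - snd z))\<^sup>2)"
    using assms(1) X_bounded X_borel assms(3) P_AE_mem
    by (rule couplings_cost_integrable)
  have "AE z in \<gamma>. r (fst z) - lam * (norm (fst z - snd z))\<^sup>2 \<le> envelope (snd z)"
    using couplings_AE[OF assms(1) X_borel X_borel assms(3) P_AE_mem]
    by eventually_elim (simp add: envelope_ge)
  then show ?thesis
    using couplings_weak_duality[OF assms(1,2) integrable_envelope, of "\<lambda>z. lam * (norm (fst z - snd z))\<^sup>2"] cost
    by simp
qed

lemma objective_le_envelope:
  assumes "prob_on X Q"
  shows "objective r lam P Q \<le> ereal (\<integral>y. envelope y \<partial>P)"
proof -
  have Q: "prob_space Q" "sets Q = sets borel" using assms unfolding prob_on_def by auto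
  have Q_AE_mem: "AE x in Q. x \<in> X" using assms X_borel by (rule prob_on_AE_mem)
  have "AE x in Q. r x \<le> r (T (T 0)) + lam * (diameter X)\<^sup>2"
    using Q_AE_mem by eventually_elim (rule r_bounded_above)
  then have "expect_ereal Q r = -\<infinity> \<or> integrable Q r"
    using Q measurable_cong_sets[OF Q(2) refl] by (intro expect_ereal_bounded_above) auto
  then show ?thesis
  proof
    assume "expect_ereal Q r = -\<infinity>"
    moreover have "0 \<le> ereal lam * enn2ereal (W2sq Q P)" using lam_nonneg by simp
    ultimately show ?thesis
      unfolding objective_def by (cases "ereal lam * enn2ereal (W2sq Q P)") auto
  next
    assume r: "integrable Q r"
    define a where "a = (\<integral>x. r x \<partial>Q)"
    define G where "G = (\<integral>y. envelope y \<partial>P)"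
    have E: "expect_ereal Q r = ereal a" unfolding a_def using r by (rule expect_ereal_integrable)
    have dual: "a - lam * (\<integral>z. (norm (fst z - snd z))\<^sup>2 \<partial>\<gamma>) \<le> G" if "\<gamma> \<in> couplings Q P" for \<gamma>
      unfolding a_def G_def using that r Q_AE_mem by (rule coupling_bound)
    show ?thesis
    proof (cases "a \<le> G")
      case True
      have "objective r lam P Q \<le> ereal a" using objective_le[OF E _ lam_nonneg, of 0] by simp
      with True show ?thesis unfolding G_def by (meson ereal_less_eq(3) order_trans)
    next
      case False
      txt \<open>For \<open>lam = 0\<close> the product coupling alone would give \<open>a \<le> G\<close>.\<close>
      have "lam \<noteq> 0"
        using dual[OF pair_measure_in_couplings] Q P_on False unfolding prob_on_def by auto
      then have lam: "lam > 0" using lam_nonneg by simp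
      have "ennreal ((a - G) / lam) \<le> W2sq Q P"
      proof (rule W2sq_ge)
        fix \<gamma> assume "\<gamma> \<in> couplings Q P"
        then show "integrable \<gamma> (\<lambda>z. (norm (fst z - snd z))\<^sup>2)"
          using X_bounded X_borel Q_AE_mem P_AE_mem by (rule couplings_cost_integrable)
        show "(a - G) / lam \<le> (\<integral>z. (norm (fst z - snd z))\<^sup>2 \<partial>\<gamma>)"
          using dual[OF \<open>\<gamma> \<in> couplings Q P\<close>] lam by (simp add: divide_le_eq mult.commute)
      qed
      then show ?thesis
        using objective_le[OF E _ lam_nonneg] False lam unfolding G_def by fastforce
    qed
  qed
qed

end

theorem theorem4p1:
  fixes X :: "'a::euclidean_space set" and P :: "'a measure"
    and r :: "'a \<Rightarrow> real" and lam :: real and T :: "'a \<Rightarrow> 'a"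
  assumes "compact X"
    and "prob_on X P"
    and "r \<in> borel_measurable borel"
    and "lam \<ge> 0"
    and "T \<in> borel_measurable borel"
    and "\<And>y. T y \<in> X"
    and "\<And>y x. x \<in> X \<Longrightarrow> r x - lam * (norm (x - y))\<^sup>2 \<le> r (T y) - lam * (norm (T y - y))\<^sup>2"
  shows "prob_on X (distr P borel T)
    \<and> (\<forall>Q. prob_on X Q \<longrightarrow> objective r lam P Q \<le> objective r lam P (distr P borel T))"
proof -
  interpret pointwise_maximizer X P r lam T
    using assms by unfold_locales
  have "prob_on X (distr P borel T)"
    using P_on T_measurable T_in X_borel by (rule prob_on_distr)
  moreover have "objective r lam P Q \<le> objective r lam P (distr P borel T)" if "prob_on X Q" for Q
    using objective_le_envelope[OF that] objective_distr_ge by (rule order_trans)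
  ultimately show ?thesis by blast
qed

end
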